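(* Let $a>0$ with $a\neq1$, and let $x>0$, $y>0$. (i) If $x\le 1$ and $a<1$, then $$\Gamma(x,y)\ \ge\ \Big(\frac{a}{e}\Big)^{x-1}\Big(\frac{1-x}{1-a}\Big)^{x-1}\int_0^1 t^{\frac{1-a}{a}}\big(-\ln(1-t)\big)^{y-1}\,dt .$$ (ii) If $x\ge1$, $a>1$ and $y>\frac{a-1}{a}$, then the integral on the right converges and the reverse inequality holds: $$\Gamma(x,y)\ \le\ \Big(\frac{a}{e}\Big)^{x-1}\Big(\frac{1-x}{1-a}\Big)^{x-1}\int_0^1 t^{\frac{1-a}{a}}\big(-\ln(1-t)\big)^{y-1}\,dt .$$ (When $x=1$ the factor $\big(\frac{1-x}{1-a}\big)^{x-1}$ is interpreted as $0^0=1$.)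
   Context: For $x>0,y>0$ the Bigamma function is the (convergent) improper integral $\Gamma(x,y):=\int_0^1(-\ln t)^{x-1}\big(-\ln(1-t)\big)^{y-1}\,dt$. *)

theory Defs
  imports "HOL-Analysis.Analysis"
begin

text \<open>Bigamma function: integral over (0,1) of a nonnegative measurable integrand
  (the improper integral coincides with the Lebesgue integral).\<close>
definition Bigamma :: "real \<Rightarrow> real \<Rightarrow> real" where
  "Bigamma x y = (LBINT t:{0<..<1}. (- ln t) powr (x - 1) * (- ln (1 - t)) powr (y - 1))"

definition powr0 :: "real \<Rightarrow> real \<Rightarrow> real" where
  "powr0 b c = (if c = 0 then 1 else b powr c)"

definition rhs_integrand :: "real \<Rightarrow> real \<Rightarrow> real \<Rightarrow> real" where
  "rhs_integrand a y t = t powr ((1 - a) / a) * (- ln (1 - t)) powr (y - 1)"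

end

theory Submission
  imports Defs
begin

text \<open>Writing \<open>u = -ln t\<close>, the weight \<open>t powr ((1-a)/a)\<close> is \<open>exp ((x-1) * u / u\<^sub>0)\<close> with
  \<open>u\<^sub>0 = a(1-x)/(1-a)\<close>, and the constant in front is \<open>(u\<^sub>0/e) powr (x-1)\<close>. So the comparison of
  the two integrands is the tangent line inequality \<open>ln u \<le> ln u\<^sub>0 - 1 + u/u\<^sub>0\<close> of the
  concave logarithm, multiplied by \<open>x - 1\<close> and exponentiated; the sign of \<open>x - 1\<close> decides the
  direction. Integrating this pointwise bound gives the theorem, once both integrands are
  known to be integrable: near each endpoint a power of \<open>-ln\<close> costs at most an arbitrarily
  small power of \<open>t\<close>, so Beta integrals dominate.\<close>

lemma set_integrable_powr_Beta:
  fixes \<alpha> \<beta> :: real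
  assumes "\<alpha> > -1" "\<beta> > -1"
  shows "set_integrable lborel {0<..<1::real} (\<lambda>t. t powr \<alpha> * (1 - t) powr \<beta>)"
proof -
  have "set_integrable lborel {0..1::real} (\<lambda>t. t powr (\<alpha> + 1 - 1) * (1 - t) powr (\<beta> + 1 - 1))"
    by (rule integrable_Beta) (use assms in auto)
  then have "set_integrable lborel {0<..<1::real} (\<lambda>t. t powr (\<alpha> + 1 - 1) * (1 - t) powr (\<beta> + 1 - 1))"
    by (rule set_integrable_subset) auto
  then show ?thesis
    by simp
qed

lemma minus_ln_le_powr:
  fixes t \<epsilon> :: real
  assumes "0 < t" "\<epsilon> > 0"
  shows "- ln t \<le> t powr (- \<epsilon>) / \<epsilon>"
proof -
  have "ln (t powr (- \<epsilon>)) \<le> t powr (- \<epsilon>) - 1"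
    by (rule ln_le_minus_one) (use assms in auto)
  then show ?thesis
    using assms by (simp add: field_simps)
qed

lemma minus_ln_powr_bound:
  fixes p \<delta> :: real
  assumes "\<delta> > 0"
  obtains c where "\<And>t. t \<in> {0<..<1} \<Longrightarrow> (- ln t) powr p \<le> c * t powr (- \<delta>) * (1 - t) powr min p 0"
proof (cases "p \<le> 0")
  case True
  have "(- ln t) powr p \<le> 1 * t powr (- \<delta>) * (1 - t) powr min p 0" if t: "t \<in> {0<..<1}" for t
  proof -
    have "1 - t \<le> - ln t"
      using ln_le_minus_one[of t] t by auto
    then have "(- ln t) powr p \<le> (1 - t) powr p"
      using True t by (intro powr_mono2') auto
    also have "\<dots> \<le> t powr (- \<delta>) * (1 - t) powr p"
    proof -
      have "1 \<le> t powr (- \<delta>)"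
        using t assms by (simp add: powr_minus_divide powr_le1)
      then show ?thesis
        using mult_right_mono[of 1 "t powr (- \<delta>)" "(1 - t) powr p"] by simp
    qed
    finally show ?thesis
      using True by simp
  qed
  then show ?thesis
    by (rule that)
next
  case False
  define \<epsilon> where "\<epsilon> = \<delta> / p"
  have \<epsilon>: "\<epsilon> > 0"
    using False assms by (simp add: \<epsilon>_def)
  have "(- ln t) powr p \<le> \<epsilon> powr (- p) * t powr (- \<delta>) * (1 - t) powr min p 0"
    if t: "t \<in> {0<..<1}" for t
  proof -
    have "(- ln t) powr p \<le> (t powr (- \<epsilon>) / \<epsilon>) powr p"
      using t \<epsilon> False by (intro powr_mono2 minus_ln_le_powr) auto
    also have "\<dots> = t powr (- \<epsilon> * p) / \<epsilon> powr p"
      using t \<epsilon> by (simp add: powr_divide powr_powr)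
    also have "\<dots> = \<epsilon> powr (- p) * t powr (- \<delta>)"
      using False by (simp add: \<epsilon>_def powr_minus_divide)
    finally show ?thesis
      using False by simp
  qed
  then show ?thesis
    by (rule that)
qed

lemma set_integrable_powr_minus_ln_powr:
  fixes \<alpha> p q :: real
  assumes "\<alpha> > -1" "\<alpha> + q > -1" "p > -1"
  shows "set_integrable lborel {0<..<1::real} (\<lambda>t. t powr \<alpha> * (- ln t) powr p * (- ln (1 - t)) powr q)"
proof -
  define \<delta> where "\<delta> = min (\<alpha> + min q 0 + 1) (min p 0 + 1) / 2"
  have "\<alpha> + min q 0 + 1 > 0" "min p 0 + 1 > 0"
    using assms by auto
  then have \<delta>: "\<delta> > 0" "\<alpha> - \<delta> + min q 0 > -1" "min p 0 - \<delta> > -1"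
    unfolding \<delta>_def by (auto simp: min_def field_simps)
  obtain c\<^sub>p where c\<^sub>p: "\<And>t. t \<in> {0<..<1} \<Longrightarrow> (- ln t) powr p \<le> c\<^sub>p * t powr (- \<delta>) * (1 - t) powr min p 0"
    using minus_ln_powr_bound[OF \<delta>(1)] by blast
  obtain c\<^sub>q where c\<^sub>q: "\<And>t. t \<in> {0<..<1} \<Longrightarrow> (- ln t) powr q \<le> c\<^sub>q * t powr (- \<delta>) * (1 - t) powr min q 0"
    using minus_ln_powr_bound[OF \<delta>(1)] by blast
  have "set_integrable lborel {0<..<1::real}
      (\<lambda>t. c\<^sub>p * c\<^sub>q * (t powr (\<alpha> - \<delta> + min q 0) * (1 - t) powr (min p 0 - \<delta>)))"
    using \<delta> by (intro set_integrable_mult_right set_integrable_powr_Beta) auto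
  then show ?thesis
  proof (rule set_integrable_bound)
    show "set_borel_measurable lborel {0<..<1} (\<lambda>t. t powr \<alpha> * (- ln t) powr p * (- ln (1 - t)) powr q)"
      unfolding set_borel_measurable_def by measurable
    show "AE t in lborel. t \<in> {0<..<1} \<longrightarrow>
        norm (t powr \<alpha> * (- ln t) powr p * (- ln (1 - t)) powr q)
          \<le> norm (c\<^sub>p * c\<^sub>q * (t powr (\<alpha> - \<delta> + min q 0) * (1 - t) powr (min p 0 - \<delta>)))"
    proof (rule AE_I2, rule impI)
      fix t :: real
      assume t: "t \<in> {0<..<1}"
      have p_bound: "(- ln t) powr p \<le> c\<^sub>p * t powr (- \<delta>) * (1 - t) powr min p 0"
        using c\<^sub>p[OF t] .
      have q_bound: "(- ln (1 - t)) powr q \<le> c\<^sub>q * (1 - t) powr (- \<delta>) * t powr min q 0"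
        using c\<^sub>q[of "1 - t"] t by simp
      have "0 \<le> c\<^sub>p * t powr (- \<delta>) * (1 - t) powr min p 0"
        using p_bound by (rule order_trans[OF powr_ge_zero])
      then have "t powr \<alpha> * (- ln t) powr p * (- ln (1 - t)) powr q
          \<le> t powr \<alpha> * (c\<^sub>p * t powr (- \<delta>) * (1 - t) powr min p 0) * (c\<^sub>q * (1 - t) powr (- \<delta>) * t powr min q 0)"
        using p_bound q_bound by (intro mult_mono mult_left_mono) auto
      also have "\<dots> = c\<^sub>p * c\<^sub>q * (t powr (\<alpha> - \<delta> + min q 0) * (1 - t) powr (min p 0 - \<delta>))"
        using t by (simp add: powr_add powr_diff powr_minus_divide field_simps)
      finally show "norm (t powr \<alpha> * (- ln t) powr p * (- ln (1 - t)) powr q)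
          \<le> norm (c\<^sub>p * c\<^sub>q * (t powr (\<alpha> - \<delta> + min q 0) * (1 - t) powr (min p 0 - \<delta>)))"
        by simp
    qed
  qed
qed

lemma Bigamma_integrand_integrable:
  fixes x y :: real
  assumes "x > 0" "y > 0"
  shows "set_integrable lborel {0<..<1::real} (\<lambda>t. (- ln t) powr (x - 1) * (- ln (1 - t)) powr (y - 1))"
proof -
  have "set_integrable lborel {0<..<1::real} (\<lambda>t. t powr 0 * (- ln t) powr (x - 1) * (- ln (1 - t)) powr (y - 1))"
    by (rule set_integrable_powr_minus_ln_powr) (use assms in auto)
  then show ?thesis
    by (rule set_integrable_cong[THEN iffD1, rotated -1]) auto
qed

lemma rhs_integrand_integrable:
  fixes a y :: real
  assumes "a > 0" "y > (a - 1) / a"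
  shows "set_integrable lborel {0<..<1::real} (rhs_integrand a y)"
proof -
  have "set_integrable lborel {0<..<1::real} (\<lambda>t. t powr ((1 - a) / a) * (- ln t) powr 0 * (- ln (1 - t)) powr (y - 1))"
    by (rule set_integrable_powr_minus_ln_powr) (use assms in \<open>auto simp: field_simps\<close>)
  then show ?thesis
    by (rule set_integrable_cong[THEN iffD1, rotated -1]) (auto simp: rhs_integrand_def)
qed

lemma ln_le_tangent:
  fixes u u\<^sub>0 :: real
  assumes "u > 0" "u\<^sub>0 > 0"
  shows "ln u \<le> ln u\<^sub>0 - 1 + u / u\<^sub>0"
  using ln_le_minus_one[of "u / u\<^sub>0"] assms by (simp add: ln_div)

lemma exp_tangent_eq:
  fixes s u u\<^sub>0 :: real
  assumes "u\<^sub>0 > 0"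
  shows "(u\<^sub>0 / exp 1) powr s * exp (s * u / u\<^sub>0) = exp (s * (ln u\<^sub>0 - 1 + u / u\<^sub>0))"
  using assms by (simp add: powr_def ln_div exp_add[symmetric] algebra_simps)

lemma powr_le_exp_tangent:
  fixes s u u\<^sub>0 :: real
  assumes "u > 0" "u\<^sub>0 > 0" "s \<ge> 0"
  shows "u powr s \<le> (u\<^sub>0 / exp 1) powr s * exp (s * u / u\<^sub>0)"
  unfolding exp_tangent_eq[OF assms(2)]
  using mult_left_mono[OF ln_le_tangent[OF assms(1,2)] assms(3)] assms by (simp add: powr_def)

lemma exp_tangent_le_powr:
  fixes s u u\<^sub>0 :: real
  assumes "u > 0" "u\<^sub>0 > 0" "s \<le> 0"
  shows "(u\<^sub>0 / exp 1) powr s * exp (s * u / u\<^sub>0) \<le> u powr s"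
  unfolding exp_tangent_eq[OF assms(2)]
  using mult_left_mono_neg[OF ln_le_tangent[OF assms(1,2)] assms(3)] assms by (simp add: powr_def)

definition tangent_const :: "real \<Rightarrow> real \<Rightarrow> real" where
  "tangent_const a x = (a / exp 1) powr (x - 1) * powr0 ((1 - x) / (1 - a)) (x - 1)"

lemma tangent_const_weight_eq:
  fixes a x t :: real
  assumes "0 < t" "a > 0" "a \<noteq> 1" "x \<noteq> 1"
  defines "u\<^sub>0 \<equiv> a * (1 - x) / (1 - a)"
  shows "tangent_const a x * t powr ((1 - a) / a)
           = (u\<^sub>0 / exp 1) powr (x - 1) * exp ((x - 1) * (- ln t) / u\<^sub>0)"
proof -
  have "tangent_const a x = (a / exp 1 * ((1 - x) / (1 - a))) powr (x - 1)"
    using assms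
    by (simp add: tangent_const_def powr0_def powr_mult[symmetric]
        del: times_divide_eq_left times_divide_eq_right)
  also have "a / exp 1 * ((1 - x) / (1 - a)) = u\<^sub>0 / exp 1"
    by (simp add: u\<^sub>0_def)
  finally have "tangent_const a x = (u\<^sub>0 / exp 1) powr (x - 1)" .
  moreover have "(x - 1) * (- ln t) / u\<^sub>0 = (1 - a) / a * ln t"
    using assms by (auto simp: u\<^sub>0_def field_simps)
  ultimately show ?thesis
    using assms by (simp add: powr_def)
qed

lemma tangent_const_weight_le_minus_ln_powr:
  fixes a x t :: real
  assumes "0 < t" "t < 1" "0 < a" "a < 1" "x \<le> 1"
  shows "tangent_const a x * t powr ((1 - a) / a) \<le> (- ln t) powr (x - 1)"
proof (cases "x = 1")
  case True
  have "t powr ((1 - a) / a) \<le> 1"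
    using assms by (intro powr_le1) auto
  then show ?thesis
    using True assms by (simp add: tangent_const_def powr0_def)
next
  case False
  define u\<^sub>0 where "u\<^sub>0 = a * (1 - x) / (1 - a)"
  have "u\<^sub>0 > 0"
    using assms False by (simp add: u\<^sub>0_def)
  then have "(u\<^sub>0 / exp 1) powr (x - 1) * exp ((x - 1) * (- ln t) / u\<^sub>0) \<le> (- ln t) powr (x - 1)"
    using assms by (intro exp_tangent_le_powr) auto
  then show ?thesis
    using tangent_const_weight_eq[of t a x] assms False by (simp add: u\<^sub>0_def)
qed

lemma minus_ln_powr_le_tangent_const_weight:
  fixes a x t :: real
  assumes "0 < t" "t < 1" "1 < a" "1 \<le> x"
  shows "(- ln t) powr (x - 1) \<le> tangent_const a x * t powr ((1 - a) / a)"
proof (cases "x = 1")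
  case True
  have "1 \<le> t powr ((1 - a) / a)"
    using powr_mono2'[of "(1 - a) / a" t 1] assms by (simp add: divide_nonpos_pos)
  then show ?thesis
    using True assms by (simp add: tangent_const_def powr0_def)
next
  case False
  define u\<^sub>0 where "u\<^sub>0 = a * (1 - x) / (1 - a)"
  have "u\<^sub>0 > 0"
    using assms False by (simp add: u\<^sub>0_def zero_less_divide_iff mult_pos_neg)
  then have "(- ln t) powr (x - 1) \<le> (u\<^sub>0 / exp 1) powr (x - 1) * exp ((x - 1) * (- ln t) / u\<^sub>0)"
    using assms by (intro powr_le_exp_tangent) auto
  then show ?thesis
    using tangent_const_weight_eq[of t a x] assms False by (simp add: u\<^sub>0_def)
qed

theorem mainTheorem4:
  fixes a x y :: real
  assumes "a > 0" "a \<noteq> 1" "x > 0" "y > 0"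
  shows "(x \<le> 1 \<and> a < 1 \<longrightarrow>
           Bigamma x y \<ge> (a / exp 1) powr (x - 1) * powr0 ((1 - x) / (1 - a)) (x - 1)
                           * (LBINT t:{0<..<1}. rhs_integrand a y t))
       \<and> (x \<ge> 1 \<and> a > 1 \<and> y > (a - 1) / a \<longrightarrow>
           set_integrable lborel {0<..<1::real} (rhs_integrand a y) \<and>
           Bigamma x y \<le> (a / exp 1) powr (x - 1) * powr0 ((1 - x) / (1 - a)) (x - 1)
                           * (LBINT t:{0<..<1}. rhs_integrand a y t))"
proof -
  define F where "F t = (- ln t) powr (x - 1) * (- ln (1 - t)) powr (y - 1)" for t :: real
  define G where "G t = tangent_const a x * rhs_integrand a y t" for t :: real
  have Bigamma_eq: "Bigamma x y = (LBINT t:{0<..<1}. F t)"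
    by (simp add: Bigamma_def F_def)
  have G_integral_eq: "tangent_const a x * (LBINT t:{0<..<1}. rhs_integrand a y t) = (LBINT t:{0<..<1}. G t)"
    by (simp add: G_def)
  have F_int: "set_integrable lborel {0<..<1} F"
    unfolding F_def using assms(3,4) by (rule Bigamma_integrand_integrable)
  have G_int: "set_integrable lborel {0<..<1} G" if "y > (a - 1) / a"
    unfolding G_def using rhs_integrand_integrable[OF assms(1) that] by simp
  have "tangent_const a x * (LBINT t:{0<..<1}. rhs_integrand a y t) \<le> Bigamma x y"
    if "x \<le> 1" "a < 1"
  proof -
    have "G t \<le> F t" if "t \<in> {0<..<1}" for t
      using mult_right_mono[OF tangent_const_weight_le_minus_ln_powr powr_ge_zero] that assms \<open>x \<le> 1\<close> \<open>a < 1\<close>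
      by (simp add: G_def F_def rhs_integrand_def mult.assoc)
    moreover have "y > (a - 1) / a"
      using assms \<open>a < 1\<close> divide_neg_pos[of "a - 1" a] by linarith
    ultimately show ?thesis
      unfolding Bigamma_eq G_integral_eq using F_int G_int by (intro set_integral_mono)
  qed
  moreover have "Bigamma x y \<le> tangent_const a x * (LBINT t:{0<..<1}. rhs_integrand a y t)"
    if "x \<ge> 1" "a > 1" "y > (a - 1) / a"
  proof -
    have "F t \<le> G t" if "t \<in> {0<..<1}" for t
      using mult_right_mono[OF minus_ln_powr_le_tangent_const_weight powr_ge_zero] that assms \<open>x \<ge> 1\<close> \<open>a > 1\<close>
      by (simp add: G_def F_def rhs_integrand_def mult.assoc)
    then show ?thesis
      unfolding Bigamma_eq G_integral_eq using F_int G_int[OF \<open>y > (a - 1) / a\<close>] by (intro set_integral_mono)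
  qed
  ultimately show ?thesis
    using rhs_integrand_integrable[OF assms(1)] unfolding tangent_const_def by blast
qed

end
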